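(* Let $m\ge 1$ and $n\ge 0$ be integers and let $M(h)$, $h\in(0,+\infty)$, be the first order Melnikov function of system $(1.1)_\epsilon$ described in the context. Then there exist real constants $\rho^{\pm}_{i,j}$ ($0\le i+j\le n$), depending on the coefficients of $p^\pm,q^\pm$, and a polynomial $\Phi$ of degree at most $m(n+1)$ such that $$M(h)=\sum_{i+j=0}^{n}\rho^{+}_{i,j}J_{i,j}(h)+\sum_{i+j=0}^{n}\rho^{-}_{i,j}I_{i,j}(h)+\Phi(u(h)),\qquad h\in(0,+\infty),$$ where $J_{i,j}(h)=\int_{L_h^+}x^iy^jdx$ and $I_{i,j}(h)=\int_{L_h^-}x^iy^jdx$.
   Context: System $(1.1)_\epsilon$: $\dot x=y+\epsilon p^{+}(x,y),\ \dot y=-x+\epsilon q^{+}(x,y)$ for $y\ge x^{m}$, and $\dot x=y+\epsilon p^{-}(x,y),\ \dot y=-x+\epsilon q^{-}(x,y)$ for $y<x^{m}$, where $p^{\pm}=\sum_{i+j=0}^{n}a^{\pm}_{i,j}x^iy^j$, $q^{\pm}=\sum_{i+j=0}^{n}b^{\pm}_{i,j}x^iy^j$ are real polynomials of degree $n$. For $h>0$ let $u=u(h)>0$ be the unique positive number with $u^2+u^{2m}=h$; the circle $x^2+y^2=h$ meets $y=x^m$ at $A=(-u,(-u)^m)$ and $B=(u,u^m)$. $L_h^{+}$ is the arc of this circle in $\{y\ge x^m\}$ traversed clockwise from $A$ to $B$, and $L_h^-$ the arc in $\{y\le x^m\}$ traversed clockwise from $B$ to $A$. The first order Melnikov function is $M(h)=\int_{L_h^+}q^+dx-p^+dy+\int_{L_h^-}q^-dx-p^-dy$.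 *)

theory Defs
  imports "HOL-Analysis.Analysis" "HOL-Computational_Algebra.Polynomial"
begin

definition bipoly :: "nat \<Rightarrow> (nat \<Rightarrow> nat \<Rightarrow> real) \<Rightarrow> real \<Rightarrow> real \<Rightarrow> real" where
  "bipoly n c x y = (\<Sum>(i,j)\<in>{(i,j). i + j \<le> n}. c i j * x ^ i * y ^ j)"

definition uu :: "nat \<Rightarrow> real \<Rightarrow> real" where
  "uu m h = (THE u. u > 0 \<and> u ^ 2 + u ^ (2 * m) = h)"

text \<open>Line integral of P dx + Q dy along the circle arc x = r sin t, y = r cos t,
  t from a to b (increasing t = clockwise orientation).\<close>
definition arc_int :: "(real \<Rightarrow> real \<Rightarrow> real) \<Rightarrow> (real \<Rightarrow> real \<Rightarrow> real)
    \<Rightarrow> real \<Rightarrow> real \<Rightarrow> real \<Rightarrow> real" where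
  "arc_int P Q r a b = integral {a..b}
     (\<lambda>t. P (r * sin t) (r * cos t) * (r * cos t) + Q (r * sin t) (r * cos t) * (- r * sin t))"

text \<open>Angles of B = (u, u^m) and A = (-u, (-u)^m) on the circle of radius sqrt h.\<close>
definition angB :: "nat \<Rightarrow> real \<Rightarrow> real" where
  "angB m h = arccos (uu m h ^ m / sqrt h)"

definition angA :: "nat \<Rightarrow> real \<Rightarrow> real" where
  "angA m h = - arccos ((- uu m h) ^ m / sqrt h)"

text \<open>Integral over L_h^+ (clockwise from A to B, in y \<ge> x^m) and over
  L_h^- (clockwise from B to A, in y \<le> x^m).\<close>
definition int_plus :: "nat \<Rightarrow> (real \<Rightarrow> real \<Rightarrow> real) \<Rightarrow> (real \<Rightarrow> real \<Rightarrow> real) \<Rightarrow> real \<Rightarrow> real" where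
  "int_plus m P Q h = arc_int P Q (sqrt h) (angA m h) (angB m h)"

definition int_minus :: "nat \<Rightarrow> (real \<Rightarrow> real \<Rightarrow> real) \<Rightarrow> (real \<Rightarrow> real \<Rightarrow> real) \<Rightarrow> real \<Rightarrow> real" where
  "int_minus m P Q h = arc_int P Q (sqrt h) (angB m h) (angA m h + 2 * pi)"

definition melnikov :: "nat \<Rightarrow> nat \<Rightarrow> (nat \<Rightarrow> nat \<Rightarrow> real) \<Rightarrow> (nat \<Rightarrow> nat \<Rightarrow> real)
    \<Rightarrow> (nat \<Rightarrow> nat \<Rightarrow> real) \<Rightarrow> (nat \<Rightarrow> nat \<Rightarrow> real) \<Rightarrow> real \<Rightarrow> real" where
  "melnikov m n ap bp am bm h =
     int_plus m (bipoly n bp) (\<lambda>x y. - bipoly n ap x y) h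
   + int_minus m (bipoly n bm) (\<lambda>x y. - bipoly n am x y) h"

definition JJ :: "nat \<Rightarrow> nat \<Rightarrow> nat \<Rightarrow> real \<Rightarrow> real" where
  "JJ m i j h = int_plus m (\<lambda>x y. x ^ i * y ^ j) (\<lambda>_ _. 0) h"

definition II :: "nat \<Rightarrow> nat \<Rightarrow> nat \<Rightarrow> real \<Rightarrow> real" where
  "II m i j h = int_minus m (\<lambda>x y. x ^ i * y ^ j) (\<lambda>_ _. 0) h"

end

(* Along each arc the dx-parts x^i y^j dx of q dx - p dy are the integrals J_{i,j}, I_{i,j}
   themselves. The dy-parts are integrated by parts,
     (j + 1) x^i y^j dy = d(x^i y^(j+1)) - i x^(i-1) y^(j+1) dx,
   which trades them for dx-integrals of the same total degree i + j <= n plus the boundary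
   values of x^i y^(j+1) at A = (-u, (-u)^m) and B = (u, u^m), namely +-(u^k - (-u)^k) with
   k = i + m (j + 1) <= m (n + 1). *)

theory Submission
  imports Defs
begin

lemma finite_bidegree_le: "finite {(i::nat, j::nat). i + j \<le> n}"
  by (rule finite_subset[of _ "{..n} \<times> {..n}"]) auto

lemma uu_unique:
  fixes h :: real
  assumes "m \<ge> 1" and "h > 0"
  shows "\<exists>!u. u > 0 \<and> u ^ 2 + u ^ (2 * m) = h"
proof -
  define g where "g u = u ^ 2 + u ^ (2 * m)" for u :: real
  have strict_mono_g: "g v < g w" if "0 < v" "v < w" for v w
  proof -
    have "v ^ 2 < w ^ 2" using that by (simp add: power_strict_mono)
    moreover have "v ^ (2 * m) \<le> w ^ (2 * m)" using that by (simp add: power_mono)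
    ultimately show ?thesis by (simp add: g_def)
  qed
  have "g 0 = 0" using \<open>m \<ge> 1\<close> by (simp add: g_def)
  moreover have "h \<le> g (1 + h)"
    using \<open>h > 0\<close> by (simp add: g_def power2_eq_square algebra_simps add_increasing2)
  moreover have "continuous_on {0..1 + h} g"
    unfolding g_def by (intro continuous_intros)
  ultimately obtain u where "0 \<le> u" "g u = h"
    using IVT'[of g 0 h "1 + h"] \<open>h > 0\<close> by auto
  with \<open>h > 0\<close> \<open>g 0 = 0\<close> have "u > 0" by (cases "u = 0") auto
  show ?thesis
  proof (rule ex1I)
    show "u > 0 \<and> u ^ 2 + u ^ (2 * m) = h" using \<open>u > 0\<close> \<open>g u = h\<close> by (simp add: g_def)
  next
    fix v assume "v > 0 \<and> v ^ 2 + v ^ (2 * m) = h"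
    then show "v = u"
      using strict_mono_g[of v u] strict_mono_g[of u v] \<open>u > 0\<close> \<open>g u = h\<close>
      by (cases v u rule: linorder_cases) (auto simp: g_def)
  qed
qed

lemma
  assumes "m \<ge> 1" and "h > 0"
  shows uu_pos: "uu m h > 0" and uu_eq: "uu m h ^ 2 + uu m h ^ (2 * m) = h"
  using theI'[OF uu_unique[OF assms]] unfolding uu_def by auto

lemma circle_point_arccos:
  fixes r u v :: real
  assumes "r > 0" "u \<ge> 0" "u ^ 2 + v ^ 2 = r ^ 2"
  shows "r * sin (arccos (v / r)) = u" "r * cos (arccos (v / r)) = v"
    and "0 \<le> arccos (v / r)" "arccos (v / r) \<le> pi"
proof -
  have "v ^ 2 \<le> r ^ 2" using assms(3) zero_le_power2[of u] by linarith
  then have "\<bar>v\<bar> \<le> r" using \<open>r > 0\<close> by (metis abs_le_square_iff abs_of_pos)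
  then have bound: "\<bar>v / r\<bar> \<le> 1" using \<open>r > 0\<close> by (simp add: abs_div)
  then show "r * cos (arccos (v / r)) = v" using \<open>r > 0\<close> by (simp add: cos_arccos_abs)
  show "0 \<le> arccos (v / r)" "arccos (v / r) \<le> pi"
    using bound unfolding abs_le_iff by (auto intro!: arccos_lbound arccos_ubound)
  have "r * sqrt (1 - (v / r) ^ 2) = sqrt (r ^ 2 - v ^ 2)"
    using \<open>r > 0\<close> by (simp add: power_divide field_simps real_sqrt_divide)
  also have "\<dots> = sqrt (u ^ 2)" by (simp flip: assms(3))
  also have "\<dots> = u" using assms(2) by simp
  finally show "r * sin (arccos (v / r)) = u" using bound by (simp add: sin_arccos_abs)
qed

lemma arc_endpoints:
  assumes "m \<ge> 1" and "h > 0"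
  defines "u \<equiv> uu m h"
  shows "sqrt h * sin (angB m h) = u" "sqrt h * cos (angB m h) = u ^ m"
    and "sqrt h * sin (angA m h) = - u" "sqrt h * cos (angA m h) = (- u) ^ m"
    and "angA m h \<le> angB m h" "angB m h \<le> angA m h + 2 * pi"
proof -
  have "u > 0" using uu_pos[OF assms(1,2)] by (simp add: u_def)
  have on_circle: "u ^ 2 + (v ^ m) ^ 2 = sqrt h ^ 2" if "v = u \<or> v = - u" for v
    using uu_eq[OF assms(1,2)] \<open>h > 0\<close> that
    by (auto simp: u_def power_mult[symmetric] mult.commute[of m])
  note B = circle_point_arccos[of "sqrt h" u "u ^ m"]
  note A = circle_point_arccos[of "sqrt h" u "(- u) ^ m"]
  show "sqrt h * sin (angB m h) = u" "sqrt h * cos (angB m h) = u ^ m"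
    using B on_circle \<open>u > 0\<close> \<open>h > 0\<close> by (simp_all add: angB_def u_def)
  show "sqrt h * sin (angA m h) = - u" "sqrt h * cos (angA m h) = (- u) ^ m"
    using A on_circle \<open>u > 0\<close> \<open>h > 0\<close> by (simp_all add: angA_def u_def)
  show "angA m h \<le> angB m h" "angB m h \<le> angA m h + 2 * pi"
    using A(3,4) B(3,4) on_circle \<open>u > 0\<close> \<open>h > 0\<close> by (simp_all add: angA_def angB_def u_def)
qed

lemma arc_int_bipoly:
  "arc_int (bipoly n c) (\<lambda>x y. - bipoly n d x y) r a b =
     (\<Sum>(i,j)\<in>{(i,j). i + j \<le> n}. c i j * arc_int (\<lambda>x y. x ^ i * y ^ j) (\<lambda>_ _. 0) r a b
                                   - d i j * arc_int (\<lambda>_ _. 0) (\<lambda>x y. x ^ i * y ^ j) r a b)"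
proof -
  define dx where "dx = (\<lambda>i j t. (r * sin t) ^ i * (r * cos t) ^ j * (r * cos t))"
  define dy where "dy = (\<lambda>i j t. (r * sin t) ^ i * (r * cos t) ^ j * (- r * sin t))"
  have integrable: "dx i j integrable_on {a..b}" "dy i j integrable_on {a..b}" for i j
    unfolding dx_def dy_def by (auto intro!: integrable_continuous_interval continuous_intros)
  have "bipoly n c (r * sin t) (r * cos t) * (r * cos t)
          + - bipoly n d (r * sin t) (r * cos t) * (- r * sin t) =
        (\<Sum>(i,j)\<in>{(i,j). i + j \<le> n}. c i j * dx i j t - d i j * dy i j t)" for t
    unfolding bipoly_def dx_def dy_def
    by (simp only: sum_distrib_right flip: sum_negf sum.distrib)
      (rule sum.cong; simp add: case_prod_unfold algebra_simps)
  then have "arc_int (bipoly n c) (\<lambda>x y. - bipoly n d x y) r a b =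
      integral {a..b} (\<lambda>t. \<Sum>(i,j)\<in>{(i,j). i + j \<le> n}. c i j * dx i j t - d i j * dy i j t)"
    by (simp add: arc_int_def)
  also have "\<dots> = (\<Sum>(i,j)\<in>{(i,j). i + j \<le> n}. integral {a..b} (\<lambda>t. c i j * dx i j t - d i j * dy i j t))"
    using integrable finite_bidegree_le[of n] unfolding case_prod_unfold
    by (subst integral_sum) (auto intro!: integrable_diff integrable_on_mult_right)
  also have "\<dots> = (\<Sum>(i,j)\<in>{(i,j). i + j \<le> n}.
                      c i j * integral {a..b} (dx i j) - d i j * integral {a..b} (dy i j))"
    using integrable by (simp add: case_prod_unfold integral_diff integrable_on_mult_right)
  finally show ?thesis
    by (simp add: arc_int_def dx_def dy_def)
qed

lemma arc_int_dy_by_parts: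
  fixes r a b :: real
  assumes "a \<le> b"
  shows "real (Suc j) * arc_int (\<lambda>_ _. 0) (\<lambda>x y. x ^ i * y ^ j) r a b =
    (r * sin b) ^ i * (r * cos b) ^ Suc j - (r * sin a) ^ i * (r * cos a) ^ Suc j
      - real i * arc_int (\<lambda>x y. x ^ (i - 1) * y ^ Suc j) (\<lambda>_ _. 0) r a b"
proof -
  define F where "F t = (r * sin t) ^ i * (r * cos t) ^ Suc j" for t
  define dx where "dx = (\<lambda>t. (r * sin t) ^ (i - 1) * (r * cos t) ^ Suc j * (r * cos t))"
  define dy where "dy = (\<lambda>t. (r * sin t) ^ i * (r * cos t) ^ j * (- r * sin t))"
  have "(F has_real_derivative (real i * dx t + real (Suc j) * dy t)) (at t)" for t
    unfolding F_def dx_def dy_def by (rule derivative_eq_intros refl | simp)+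
  then have "((\<lambda>t. real i * dx t + real (Suc j) * dy t) has_integral F b - F a) {a..b}"
    using assms by (intro fundamental_theorem_of_calculus)
      (auto simp flip: has_real_derivative_iff_has_vector_derivative intro: has_field_derivative_at_within)
  then have "integral {a..b} (\<lambda>t. real i * dx t + real (Suc j) * dy t) = F b - F a"
    by (rule integral_unique)
  moreover have "dx integrable_on {a..b}" "dy integrable_on {a..b}"
    unfolding dx_def dy_def by (auto intro!: integrable_continuous_interval continuous_intros)
  ultimately have "real i * integral {a..b} dx + real (Suc j) * integral {a..b} dy = F b - F a"
    by (simp add: integral_add integrable_on_mult_right)
  moreover have "arc_int (\<lambda>x y. x ^ (i - 1) * y ^ Suc j) (\<lambda>_ _. 0) r a b = integral {a..b} dx"
    and "arc_int (\<lambda>_ _. 0) (\<lambda>x y. x ^ i * y ^ j) r a b = integral {a..b} dy"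
    by (simp_all add: arc_int_def dx_def dy_def)
  ultimately show ?thesis
    by (simp add: F_def algebra_simps)
qed

lemma int_plus_dy_monomial:
  assumes "m \<ge> 1" and "h > 0"
  defines "u \<equiv> uu m h"
  shows "real (Suc j) * int_plus m (\<lambda>_ _. 0) (\<lambda>x y. x ^ i * y ^ j) h =
    u ^ (i + m * Suc j) - (- u) ^ (i + m * Suc j) - real i * JJ m (i - 1) (Suc j) h"
  using arc_int_dy_by_parts[of "angA m h" "angB m h" j i "sqrt h"] arc_endpoints[OF assms(1,2)]
  by (simp add: int_plus_def JJ_def u_def power_add power_mult)

lemma int_minus_dy_monomial:
  assumes "m \<ge> 1" and "h > 0"
  defines "u \<equiv> uu m h"
  shows "real (Suc j) * int_minus m (\<lambda>_ _. 0) (\<lambda>x y. x ^ i * y ^ j) h =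
    (- u) ^ (i + m * Suc j) - u ^ (i + m * Suc j) - real i * II m (i - 1) (Suc j) h"
  using arc_int_dy_by_parts[of "angB m h" "angA m h + 2 * pi" j i "sqrt h"] arc_endpoints[OF assms(1,2)]
  by (simp add: int_minus_def II_def u_def power_add power_mult)

definition JI_combination ::
    "nat \<Rightarrow> nat \<Rightarrow> (nat \<Rightarrow> nat \<Rightarrow> real) \<Rightarrow> (nat \<Rightarrow> nat \<Rightarrow> real) \<Rightarrow> real poly \<Rightarrow> real \<Rightarrow> real" where
  "JI_combination m n \<rho>p \<rho>m \<Phi> h =
     (\<Sum>(i,j)\<in>{(i,j). i + j \<le> n}. \<rho>p i j * JJ m i j h)
   + (\<Sum>(i,j)\<in>{(i,j). i + j \<le> n}. \<rho>m i j * II m i j h)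
   + poly \<Phi> (uu m h)"

definition in_JI_span :: "nat \<Rightarrow> nat \<Rightarrow> (real \<Rightarrow> real) \<Rightarrow> bool" where
  "in_JI_span m n f \<longleftrightarrow> (\<exists>\<rho>p \<rho>m \<Phi>. degree \<Phi> \<le> m * (n + 1) \<and> (\<forall>h > 0. f h = JI_combination m n \<rho>p \<rho>m \<Phi> h))"

lemma in_JI_span_cong:
  assumes "in_JI_span m n f" and "\<And>h. h > 0 \<Longrightarrow> g h = f h"
  shows "in_JI_span m n g"
  using assms unfolding in_JI_span_def by metis

lemma in_JI_span_zero: "in_JI_span m n (\<lambda>_. 0)"
  unfolding in_JI_span_def JI_combination_def
  by (intro exI[of _ "\<lambda>_ _. 0"] exI[of _ 0]) simp

lemma in_JI_span_add:
  assumes "in_JI_span m n f" and "in_JI_span m n g"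
  shows "in_JI_span m n (\<lambda>h. f h + g h)"
proof -
  obtain p1 q1 P1 p2 q2 P2 where
    "degree P1 \<le> m * (n + 1)" "\<forall>h > 0. f h = JI_combination m n p1 q1 P1 h" and
    "degree P2 \<le> m * (n + 1)" "\<forall>h > 0. g h = JI_combination m n p2 q2 P2 h"
    using assms unfolding in_JI_span_def by blast
  then show ?thesis
    unfolding in_JI_span_def JI_combination_def
    by (intro exI[of _ "\<lambda>i j. p1 i j + p2 i j"] exI[of _ "\<lambda>i j. q1 i j + q2 i j"] exI[of _ "P1 + P2"])
      (auto simp: degree_add_le distrib_right sum.distrib case_prod_unfold)
qed

lemma in_JI_span_scale:
  assumes "in_JI_span m n f"
  shows "in_JI_span m n (\<lambda>h. c * f h)"
proof -
  obtain p q P where "degree P \<le> m * (n + 1)" "\<forall>h > 0. f h = JI_combination m n p q P h"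
    using assms unfolding in_JI_span_def by blast
  then show ?thesis
    unfolding in_JI_span_def JI_combination_def
    by (intro exI[of _ "\<lambda>i j. c * p i j"] exI[of _ "\<lambda>i j. c * q i j"] exI[of _ "smult c P"])
      (auto simp: distrib_left sum_distrib_left case_prod_unfold mult.assoc intro: le_trans[OF degree_smult_le])
qed

lemma in_JI_span_sum:
  "finite A \<Longrightarrow> (\<And>x. x \<in> A \<Longrightarrow> in_JI_span m n (F x)) \<Longrightarrow> in_JI_span m n (\<lambda>h. \<Sum>x\<in>A. F x h)"
  by (induction A rule: finite_induct) (simp_all add: in_JI_span_zero in_JI_span_add)

lemma in_JI_span_sum_bidegree_le:
  assumes "\<And>i j. i + j \<le> n \<Longrightarrow> in_JI_span m n (F i j)"
  shows "in_JI_span m n (\<lambda>h. \<Sum>(i,j)\<in>{(i,j). i + j \<le> n}. F i j h)"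
  using assms finite_bidegree_le[of n] by (auto intro: in_JI_span_sum)

lemma sum_bidegree_le_indicator:
  fixes i j n :: nat
  assumes "i + j \<le> n"
  shows "(\<Sum>(k,l)\<in>{(k,l). k + l \<le> n}. of_bool (k = i \<and> l = j) * G k l) = (G i j :: real)"
proof -
  have "(\<Sum>(k,l)\<in>{(k,l). k + l \<le> n}. of_bool (k = i \<and> l = j) * G k l) =
      (\<Sum>p\<in>{(k,l). k + l \<le> n}. if p = (i, j) then G i j else 0)"
    by (rule sum.cong) auto
  also have "\<dots> = G i j" using assms finite_bidegree_le[of n] by simp
  finally show ?thesis .
qed

lemma in_JI_span_JJ: "i + j \<le> n \<Longrightarrow> in_JI_span m n (JJ m i j)"
  unfolding in_JI_span_def JI_combination_def
  by (intro exI[of _ "\<lambda>k l. of_bool (k = i \<and> l = j)"] exI[of _ "\<lambda>_ _. 0"] exI[of _ 0])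
    (simp add: sum_bidegree_le_indicator)

lemma in_JI_span_II: "i + j \<le> n \<Longrightarrow> in_JI_span m n (II m i j)"
  unfolding in_JI_span_def JI_combination_def
  by (intro exI[of _ "\<lambda>_ _. 0"] exI[of _ "\<lambda>k l. of_bool (k = i \<and> l = j)"] exI[of _ 0])
    (simp add: sum_bidegree_le_indicator)

lemma in_JI_span_power_diff:
  assumes "k \<le> m * (n + 1)"
  shows "in_JI_span m n (\<lambda>h. uu m h ^ k - (- uu m h) ^ k)"
proof -
  define \<Phi> :: "real poly" where "\<Phi> = monom 1 k - monom ((- 1) ^ k) k"
  have "degree \<Phi> \<le> k"
    unfolding \<Phi>_def by (intro degree_diff_le degree_monom_le)
  moreover have "poly \<Phi> u = u ^ k - (- u) ^ k" for u
    by (simp add: \<Phi>_def poly_monom power_minus[of u])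
  ultimately show ?thesis
    using assms unfolding in_JI_span_def JI_combination_def
    by (intro exI[of _ "\<lambda>_ _. 0"] exI[of _ \<Phi>]) simp
qed

(* For i = 0 the index (i - 1, j + 1) = (0, j + 1) may leave the range i + j <= n;
   the vanishing coefficient makes that harmless. *)
lemma in_JI_span_index_shift:
  assumes "i + j \<le> n" and "\<And>k l. k + l \<le> n \<Longrightarrow> in_JI_span m n (G k l)"
  shows "in_JI_span m n (\<lambda>h. real i * G (i - 1) (Suc j) h)"
proof (cases i)
  case 0
  then show ?thesis using in_JI_span_zero by simp
next
  case (Suc i')
  then show ?thesis using assms by (intro in_JI_span_scale) simp
qed

lemma dy_boundary_degree:
  assumes "m \<ge> 1" and "i + j \<le> n"
  shows "i + m * Suc j \<le> m * (n + 1)"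
proof -
  have "i + m * Suc j \<le> m * (i + Suc j)" using assms(1) by (simp add: algebra_simps)
  also have "\<dots> \<le> m * (n + 1)" using assms(2) by simp
  finally show ?thesis .
qed

lemma in_JI_span_int_plus_dy:
  assumes "m \<ge> 1" and "i + j \<le> n"
  shows "in_JI_span m n (int_plus m (\<lambda>_ _. 0) (\<lambda>x y. x ^ i * y ^ j))"
proof -
  let ?k = "i + m * Suc j"
  have "in_JI_span m n (\<lambda>h. (1 / real (Suc j)) *
          ((uu m h ^ ?k - (- uu m h) ^ ?k) + (- 1) * (real i * JJ m (i - 1) (Suc j) h)))"
    using assms by (intro in_JI_span_scale in_JI_span_add in_JI_span_power_diff dy_boundary_degree
        in_JI_span_index_shift in_JI_span_JJ)
  then show ?thesis
    by (rule in_JI_span_cong) (use int_plus_dy_monomial[OF assms(1), of _ j i] in \<open>simp add: field_simps\<close>)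
qed

lemma in_JI_span_int_minus_dy:
  assumes "m \<ge> 1" and "i + j \<le> n"
  shows "in_JI_span m n (int_minus m (\<lambda>_ _. 0) (\<lambda>x y. x ^ i * y ^ j))"
proof -
  let ?k = "i + m * Suc j"
  have "in_JI_span m n (\<lambda>h. (1 / real (Suc j)) *
          ((- 1) * (uu m h ^ ?k - (- uu m h) ^ ?k) + (- 1) * (real i * II m (i - 1) (Suc j) h)))"
    using assms by (intro in_JI_span_scale in_JI_span_add in_JI_span_power_diff dy_boundary_degree
        in_JI_span_index_shift in_JI_span_II)
  then show ?thesis
    by (rule in_JI_span_cong) (use int_minus_dy_monomial[OF assms(1), of _ j i] in \<open>simp add: field_simps\<close>)
qed

lemma melnikov_eq_sum_monomial_integrals:
  "melnikov m n ap bp am bm h =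
    (\<Sum>(i,j)\<in>{(i,j). i + j \<le> n}.
        bp i j * JJ m i j h + (- ap i j) * int_plus m (\<lambda>_ _. 0) (\<lambda>x y. x ^ i * y ^ j) h
      + (bm i j * II m i j h + (- am i j) * int_minus m (\<lambda>_ _. 0) (\<lambda>x y. x ^ i * y ^ j) h))"
  unfolding melnikov_def int_plus_def int_minus_def arc_int_bipoly JJ_def II_def
  by (simp add: sum.distrib case_prod_unfold)

theorem lemma3p2:
  fixes m n :: nat and ap bp am bm :: "nat \<Rightarrow> nat \<Rightarrow> real"
  assumes "m \<ge> 1"
  shows "\<exists>(\<rho>p :: nat \<Rightarrow> nat \<Rightarrow> real) (\<rho>m :: nat \<Rightarrow> nat \<Rightarrow> real) (\<Phi> :: real poly).
           degree \<Phi> \<le> m * (n + 1) \<and>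
           (\<forall>h > 0. melnikov m n ap bp am bm h =
               (\<Sum>(i,j)\<in>{(i,j). i + j \<le> n}. \<rho>p i j * JJ m i j h)
             + (\<Sum>(i,j)\<in>{(i,j). i + j \<le> n}. \<rho>m i j * II m i j h)
             + poly \<Phi> (uu m h))"
proof -
  have "in_JI_span m n (melnikov m n ap bp am bm)"
    unfolding melnikov_eq_sum_monomial_integrals using assms
    by (intro in_JI_span_sum_bidegree_le in_JI_span_add in_JI_span_scale in_JI_span_JJ
        in_JI_span_II in_JI_span_int_plus_dy in_JI_span_int_minus_dy)
  then show ?thesis
    unfolding in_JI_span_def JI_combination_def .
qed

end
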